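(* Let $q = p^l$ with $p$ prime and $l \geq 1$ an integer, and let $\mathbb{F}_q$ be the finite field with $q$ elements. Let $1 \leq k \leq m$ be integers and let $$Q(x_1,\ldots,x_m) = \sum_{I \subseteq \{1,\ldots,m\},\ \#I = k} \delta_I \prod_{i \in I} x_i,$$ where the coefficients $\delta_I \in \mathbb{F}_q$ are not all zero. Let $\mathcal{Z} = \{(y_1,\ldots,y_m) \in \mathbb{F}_q^m : Q(y_1,\ldots,y_m) = 0\}$ be the set of zeros of $Q$. Then $$q^{m-k}(q-1)^{k-1} \leq \#\mathcal{Z} \leq q^{m-k}\left(q^k - (q-1)^k\right).$$
   Context: In this paper, a "homogenous polynomial of degree $k$" in the variables $x_1,\ldots,x_m$ over $\mathbb{F}_q$ means a polynomial of the displayed form: an $\mathbb{F}_q$-linear combination, with not all coefficients zero, of the square-free monomials $\prod_{i \in I} x_i$ over subsets $I \subseteq \{1,\ldots,m\}$ of cardinality exactly $k$. $\#$ denotes cardinality. *)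

theory Defs
  imports "HOL-Library.FuncSet" "HOL-Library.Cardinality" "HOL-Computational_Algebra.Primes"
begin

definition hom_poly_eval :: "nat \<Rightarrow> nat \<Rightarrow> (nat set \<Rightarrow> 'a::comm_ring_1) \<Rightarrow> (nat \<Rightarrow> 'a) \<Rightarrow> 'a" where
  "hom_poly_eval m k \<delta> y = (\<Sum>I\<in>{I. I \<subseteq> {..<m} \<and> card I = k}. \<delta> I * (\<Prod>i\<in>I. y i))"

definition hom_poly_zeros :: "nat \<Rightarrow> nat \<Rightarrow> (nat set \<Rightarrow> 'a::comm_ring_1) \<Rightarrow> (nat \<Rightarrow> 'a) set" where
  "hom_poly_zeros m k \<delta> = {y \<in> {..<m} \<rightarrow>\<^sub>E (UNIV :: 'a set). hom_poly_eval m k \<delta> y = 0}"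

end

theory Submission
  imports Defs
begin

text \<open>Split \<open>Q\<close> along a variable \<open>x\<^sub>i\<close> occurring in one of its monomials:
  \<open>Q = x\<^sub>i A + B\<close> with \<open>A\<close>, \<open>B\<close> free of \<open>x\<^sub>i\<close> and \<open>A\<close> a nonzero square-free
  polynomial of degree at most \<open>k - 1\<close>. Every point of the other coordinates where \<open>A\<close> does
  not vanish extends to exactly one zero of \<open>Q\<close>, so \<open>Q\<close> has at least as many zeros as \<open>A\<close>
  has non-zeros. A nonzero square-free polynomial of degree at most \<open>d\<close> in \<open>n\<close> variables has
  at least \<open>(q - 1)\<^sup>d q\<^bsup>n - d\<^esup>\<close> non-zeros: splitting off a variable as above, either
  \<open>A \<noteq> 0\<close> and every non-zero of \<open>A\<close> yields \<open>q - 1\<close> non-zeros, or \<open>A = 0\<close> and every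
  non-zero of \<open>B\<close> yields \<open>q\<close>. This gives the lower bound; the upper bound is the same count of
  non-zeros applied to \<open>Q\<close> itself.\<close>

definition multilinear_eval :: "'v set \<Rightarrow> ('v set \<Rightarrow> 'a::comm_ring_1) \<Rightarrow> ('v \<Rightarrow> 'a) \<Rightarrow> 'a" where
  "multilinear_eval V c y = (\<Sum>I\<in>Pow V. c I * (\<Prod>i\<in>I. y i))"

lemma multilinear_eval_insert:
  assumes "finite V" "i \<notin> V"
  shows "multilinear_eval (insert i V) c (y(i := x))
    = x * multilinear_eval V (\<lambda>I. c (insert i I)) y + multilinear_eval V c y"
proof -
  have inj: "inj_on (insert i) (Pow V)"
    using assms(2) by (intro inj_onI) (metis Pow_iff insert_ident subsetD)
  have prod_upd: "(\<Prod>j\<in>I. (y(i := x)) j) = (\<Prod>j\<in>I. y j)" if "I \<subseteq> V" for I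
    using that assms(2) by (intro prod.cong) auto
  have prod_insert_upd: "(\<Prod>j\<in>insert i I. (y(i := x)) j) = x * (\<Prod>j\<in>I. y j)" if "I \<subseteq> V" for I
    using that assms prod_upd[OF that] by (subst prod.insert) (auto dest: finite_subset)
  have disj: "Pow V \<inter> insert i ` Pow V = {}"
    using assms(2) by blast
  have "multilinear_eval (insert i V) c (y(i := x))
      = (\<Sum>I\<in>Pow V. c I * (\<Prod>j\<in>I. (y(i := x)) j))
        + (\<Sum>I\<in>Pow V. c (insert i I) * (\<Prod>j\<in>insert i I. (y(i := x)) j))"
    unfolding multilinear_eval_def Pow_insert
    using assms(1) disj by (simp add: sum.union_disjoint sum.reindex[OF inj] del: fun_upd_apply)
  also have "\<dots> = multilinear_eval V c y + (\<Sum>I\<in>Pow V. x * (c (insert i I) * (\<Prod>j\<in>I. y j)))"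
    by (simp add: multilinear_eval_def prod_upd prod_insert_upd ac_simps del: fun_upd_apply)
  finally show ?thesis
    by (simp add: multilinear_eval_def sum_distrib_left)
qed

lemma card_PiE_insert_filter:
  fixes P :: "('v \<Rightarrow> 'a::finite) \<Rightarrow> bool"
  assumes "finite V" "i \<notin> V"
  shows "card {y \<in> insert i V \<rightarrow>\<^sub>E UNIV. P y} = (\<Sum>y\<in>V \<rightarrow>\<^sub>E UNIV. card {x. P (y(i := x))})"
proof -
  let ?S = "SIGMA y:V \<rightarrow>\<^sub>E UNIV. {x. P (y(i := x))}"
  have "{y \<in> insert i V \<rightarrow>\<^sub>E UNIV. P y} = (\<lambda>(y, x). y(i := x)) ` ?S"
    using assms(2) by (auto simp: PiE_insert_eq)
  moreover have "inj_on (\<lambda>(y, x). y(i := x)) ?S"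
    using assms(2) by (intro inj_onI) (clarsimp simp: fun_eq_iff PiE_def extensional_def; metis)
  ultimately have "card {y \<in> insert i V \<rightarrow>\<^sub>E UNIV. P y} = card ?S"
    by (simp add: card_image)
  also have "\<dots> = (\<Sum>y\<in>V \<rightarrow>\<^sub>E UNIV. card {x. P (y(i := x))})"
    using assms(1) by (simp add: finite_PiE)
  finally show ?thesis .
qed

lemma card_multilinear_insert_filter:
  fixes c :: "'v set \<Rightarrow> 'a::{comm_ring_1,finite}"
  assumes "finite V" "i \<notin> V"
  shows "card {y \<in> insert i V \<rightarrow>\<^sub>E UNIV. P (multilinear_eval (insert i V) c y)}
    = (\<Sum>y\<in>V \<rightarrow>\<^sub>E UNIV.
        card {x. P (x * multilinear_eval V (\<lambda>I. c (insert i I)) y + multilinear_eval V c y)})"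
  unfolding card_PiE_insert_filter[OF assms] multilinear_eval_insert[OF assms] ..

definition multilinear_degree_le :: "'v set \<Rightarrow> ('v set \<Rightarrow> 'a::zero) \<Rightarrow> nat \<Rightarrow> bool" where
  "multilinear_degree_le V c d \<longleftrightarrow> (\<forall>I\<subseteq>V. c I \<noteq> 0 \<longrightarrow> card I \<le> d)"

lemma multilinear_degree_le_insert:
  assumes "finite V" "i \<notin> V" "multilinear_degree_le (insert i V) c d"
  shows "multilinear_degree_le V (\<lambda>I. c (insert i I)) (d - 1)"
    and "J \<subseteq> V \<Longrightarrow> c (insert i J) \<noteq> 0 \<Longrightarrow> 1 \<le> d"
proof -
  have Suc_le: "Suc (card J) \<le> d" if "J \<subseteq> V" "c (insert i J) \<noteq> 0" for J
  proof -
    have "card (insert i J) \<le> d"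
      using assms(3) that unfolding multilinear_degree_le_def by blast
    moreover have "card (insert i J) = Suc (card J)"
      using finite_subset[OF that(1) assms(1)] that(1) assms(2) by (subst card_insert_disjoint) auto
    ultimately show ?thesis
      by simp
  qed
  show "multilinear_degree_le V (\<lambda>I. c (insert i I)) (d - 1)"
    unfolding multilinear_degree_le_def
  proof (intro allI impI)
    fix J
    assume "J \<subseteq> V" "c (insert i J) \<noteq> 0"
    then have "Suc (card J) \<le> d"
      by (rule Suc_le)
    then show "card J \<le> d - 1"
      by simp
  qed
  show "1 \<le> d" if "J \<subseteq> V" "c (insert i J) \<noteq> 0"
    using Suc_le[OF that] by simp
qed

lemma multilinear_degree_le_subset:
  assumes "finite V" "V \<subseteq> W" "multilinear_degree_le W c d"
  shows "multilinear_degree_le V c (min d (card V))"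
  using assms card_mono[OF assms(1)] unfolding multilinear_degree_le_def by auto

lemma
  fixes a b :: "'a::{field,finite}"
  assumes "a \<noteq> 0"
  shows card_affine_zeros: "card {x. x * a + b = 0} = 1"
    and card_affine_nonzeros: "card {x. x * a + b \<noteq> 0} = CARD('a) - 1"
proof -
  have zeros: "{x. x * a + b = 0} = {- b / a}"
    using assms by (auto simp: field_simps eq_neg_iff_add_eq_0)
  then show "card {x. x * a + b = 0} = 1"
    by simp
  have "{x. x * a + b \<noteq> 0} = UNIV - {- b / a}"
    using zeros by blast
  then show "card {x. x * a + b \<noteq> 0} = CARD('a) - 1"
    by (simp add: card_Diff_subset)
qed

lemma card_filter_mult_le_sum:
  fixes f :: "'b \<Rightarrow> nat"
  assumes "finite S" "\<And>y. y \<in> S \<Longrightarrow> Q y \<Longrightarrow> b \<le> f y"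
  shows "card {y \<in> S. Q y} * b \<le> sum f S"
proof -
  have "card {y \<in> S. Q y} * b \<le> sum f {y \<in> S. Q y}"
    using sum_bounded_below[of "{y \<in> S. Q y}" b f] assms(2) by auto
  also have "\<dots> \<le> sum f S"
    using assms(1) by (intro sum_mono2) auto
  finally show ?thesis .
qed

lemma card_multilinear_nonzeros_ge:
  fixes c :: "'v set \<Rightarrow> 'a::{field,finite}"
  assumes "finite V" and "\<exists>I\<subseteq>V. c I \<noteq> 0" and "multilinear_degree_le V c d" and "d \<le> card V"
  shows "(CARD('a) - 1) ^ d * CARD('a) ^ (card V - d)
    \<le> card {y \<in> V \<rightarrow>\<^sub>E UNIV. multilinear_eval V c y \<noteq> 0}"
  using assms
proof (induction V arbitrary: c d rule: finite_induct)
  case empty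
  then show ?case
    by (simp add: multilinear_eval_def)
next
  case (insert i V)
  let ?q = "CARD('a)"
  let ?a = "\<lambda>I. c (insert i I)"
  let ?nonzeros = "\<lambda>c. card {y \<in> V \<rightarrow>\<^sub>E UNIV. multilinear_eval V c y \<noteq> 0}"
  let ?count = "\<Sum>y\<in>V \<rightarrow>\<^sub>E UNIV. card {x. x * multilinear_eval V ?a y + multilinear_eval V c y \<noteq> 0}"
  note deg = multilinear_degree_le_insert[OF insert.hyps insert.prems(2)]
  have "(?q - 1) ^ d * ?q ^ (card (insert i V) - d) \<le> ?count"
  proof (cases "\<exists>I\<subseteq>V. ?a I \<noteq> 0")
    case True
    then have "1 \<le> d"
      using deg(2) by blast
    then have "(?q - 1) ^ d * ?q ^ (card (insert i V) - d)
        = (?q - 1) ^ (d - 1) * ?q ^ (card V - (d - 1)) * (?q - 1)"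
      using insert.hyps by (cases d) (simp_all add: mult.commute)
    also have "\<dots> \<le> ?nonzeros ?a * (?q - 1)"
      using insert.IH[OF True deg(1)] insert.prems(3) insert.hyps by simp
    also have "\<dots> \<le> ?count"
      by (rule card_filter_mult_le_sum) (simp_all add: card_affine_nonzeros finite_PiE insert.hyps(1))
    finally show ?thesis .
  next
    case False
    then have a_eq_0: "multilinear_eval V ?a y = 0" for y
      by (simp add: multilinear_eval_def)
    obtain I where I: "I \<subseteq> insert i V" "c I \<noteq> 0"
      using insert.prems(1) by blast
    have "I \<subseteq> V"
    proof (rule ccontr)
      assume "\<not> I \<subseteq> V"
      then have "?a (I - {i}) \<noteq> 0" and "I - {i} \<subseteq> V"
        using I by (auto simp: insert_absorb)
      then show False
        using False by blast
    qed
    define d' where "d' = min d (card V)"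
    have "(?q - 1) ^ d * ?q ^ (card (insert i V) - d) \<le> (?q - 1) ^ d' * ?q ^ (card V - d') * ?q"
    proof (cases "d \<le> card V")
      case True
      then show ?thesis
        using insert.hyps by (simp add: d'_def Suc_diff_le)
    next
      case False
      then have "d = Suc (card V)" "d' = card V"
        using insert.prems(3) insert.hyps by (auto simp: d'_def)
      then show ?thesis
        using insert.hyps by (simp add: mult.commute mult_le_mono2)
    qed
    also have "\<dots> \<le> ?nonzeros c * ?q"
      using insert.IH[OF _ multilinear_degree_le_subset[OF insert.hyps(1) _ insert.prems(2)]]
        \<open>I \<subseteq> V\<close> I(2) by (auto simp: d'_def)
    also have "\<dots> \<le> ?count"
      by (rule card_filter_mult_le_sum) (simp_all add: a_eq_0 finite_PiE insert.hyps(1))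
    finally show ?thesis .
  qed
  then show ?case
    unfolding card_multilinear_insert_filter[OF insert.hyps, where P = "\<lambda>t. t \<noteq> 0"] .
qed

lemma card_multilinear_zeros_ge:
  fixes c :: "'v set \<Rightarrow> 'a::{field,finite}"
  assumes "finite V" and "I \<subseteq> V" "I \<noteq> {}" "c I \<noteq> 0" and "multilinear_degree_le V c k"
    and "k \<le> card V"
  shows "CARD('a) ^ (card V - k) * (CARD('a) - 1) ^ (k - 1)
    \<le> card {y \<in> V \<rightarrow>\<^sub>E UNIV. multilinear_eval V c y = 0}"
proof -
  let ?q = "CARD('a)"
  obtain i where "i \<in> I"
    using assms(3) by blast
  define W where "W = V - {i}"
  have V: "V = insert i W" and W: "finite W" "i \<notin> W"
    using assms(1,2) \<open>i \<in> I\<close> by (auto simp: W_def)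
  let ?a = "\<lambda>J. c (insert i J)"
  note deg = multilinear_degree_le_insert[OF W assms(5)[unfolded V]]
  have "I - {i} \<subseteq> W" "?a (I - {i}) \<noteq> 0"
    using assms(2,4) \<open>i \<in> I\<close> by (auto simp: W_def insert_absorb)
  then have a_nonzero: "\<exists>J\<subseteq>W. ?a J \<noteq> 0" and "1 \<le> k"
    using deg(2) by blast+
  then have exponents: "k - 1 \<le> card W" "card W - (k - 1) = card V - k"
    using assms(6) W V by auto
  have "?q ^ (card V - k) * (?q - 1) ^ (k - 1)
      = (?q - 1) ^ (k - 1) * ?q ^ (card W - (k - 1)) * 1"
    unfolding exponents(2) by (simp add: mult.commute)
  also have "\<dots> \<le> card {y \<in> W \<rightarrow>\<^sub>E UNIV. multilinear_eval W ?a y \<noteq> 0} * 1"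
    using card_multilinear_nonzeros_ge[OF W(1) a_nonzero deg(1) exponents(1)] by simp
  also have "\<dots> \<le> (\<Sum>y\<in>W \<rightarrow>\<^sub>E UNIV. card {x. x * multilinear_eval W ?a y + multilinear_eval W c y = 0})"
    by (rule card_filter_mult_le_sum) (simp_all add: card_affine_zeros finite_PiE W(1))
  also have "\<dots> = card {y \<in> V \<rightarrow>\<^sub>E UNIV. multilinear_eval V c y = 0}"
    unfolding V by (rule card_multilinear_insert_filter[OF W, where P = "\<lambda>t. t = 0", symmetric])
  finally show ?thesis .
qed

lemma card_multilinear_zeros_le:
  fixes c :: "'v set \<Rightarrow> 'a::{field,finite}"
  assumes "finite V" and "\<exists>I\<subseteq>V. c I \<noteq> 0" and "multilinear_degree_le V c d" and "d \<le> card V"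
  shows "card {y \<in> V \<rightarrow>\<^sub>E UNIV. multilinear_eval V c y = 0}
    \<le> CARD('a) ^ (card V - d) * (CARD('a) ^ d - (CARD('a) - 1) ^ d)"
proof -
  let ?q = "CARD('a)"
  let ?zeros = "{y \<in> V \<rightarrow>\<^sub>E UNIV. multilinear_eval V c y = 0}"
  let ?nonzeros = "{y \<in> V \<rightarrow>\<^sub>E UNIV. multilinear_eval V c y \<noteq> 0}"
  have "card ?zeros + card ?nonzeros = card (V \<rightarrow>\<^sub>E (UNIV :: 'a set))"
    using assms(1) by (subst card_Un_disjoint[symmetric]) (auto simp: finite_PiE intro: arg_cong[where f = card])
  also have "\<dots> = ?q ^ (card V - d) * ?q ^ d"
    using assms(1,4) by (simp add: card_funcsetE power_add[symmetric])
  finally show ?thesis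
    using card_multilinear_nonzeros_ge[OF assms] by (simp add: diff_mult_distrib2 mult.commute)
qed

lemma hom_poly_eval_eq_multilinear_eval:
  "hom_poly_eval m k \<delta> = multilinear_eval {..<m} (\<lambda>I. if card I = k then \<delta> I else 0)"
proof
  fix y :: "nat \<Rightarrow> 'a"
  have "multilinear_eval {..<m} (\<lambda>I. if card I = k then \<delta> I else 0) y
      = (\<Sum>I\<in>Pow {..<m}. if card I = k then \<delta> I * (\<Prod>i\<in>I. y i) else 0)"
    unfolding multilinear_eval_def by (intro sum.cong) auto
  also have "\<dots> = (\<Sum>I\<in>{I. I \<subseteq> {..<m} \<and> card I = k}. \<delta> I * (\<Prod>i\<in>I. y i))"
    by (subst sum.inter_filter[symmetric]) (auto intro: sum.cong)
  finally show "hom_poly_eval m k \<delta> y = multilinear_eval {..<m} (\<lambda>I. if card I = k then \<delta> I else 0) y"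
    by (simp add: hom_poly_eval_def)
qed

theorem theorem1:
  fixes \<delta> :: "nat set \<Rightarrow> 'a::{field,finite}"
    and p l q m k :: nat
  assumes "prime p" and "l \<ge> 1" and "q = p ^ l" and "CARD('a) = q"
    and "1 \<le> k" and "k \<le> m"
    and "\<exists>I. I \<subseteq> {..<m} \<and> card I = k \<and> \<delta> I \<noteq> 0"
  shows "q ^ (m - k) * (q - 1) ^ (k - 1) \<le> card (hom_poly_zeros m k \<delta>)
    \<and> card (hom_poly_zeros m k \<delta>) \<le> q ^ (m - k) * (q ^ k - (q - 1) ^ k)"
proof -
  define c where "c I = (if card I = k then \<delta> I else 0)" for I
  obtain I where I: "I \<subseteq> {..<m}" "card I = k" "\<delta> I \<noteq> 0"
    using assms(7) by blast
  have "I \<noteq> {}" "c I \<noteq> 0"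
    using I assms(5) by (auto simp: c_def)
  moreover have "multilinear_degree_le {..<m} c k"
    by (simp add: multilinear_degree_le_def c_def)
  moreover have "hom_poly_zeros m k \<delta> = {y \<in> {..<m} \<rightarrow>\<^sub>E UNIV. multilinear_eval {..<m} c y = 0}"
    by (simp add: hom_poly_zeros_def hom_poly_eval_eq_multilinear_eval c_def[abs_def])
  ultimately show ?thesis
    using card_multilinear_zeros_ge[of "{..<m}" I c k] card_multilinear_zeros_le[of "{..<m}" c k]
      I(1) assms(4,6) by auto
qed

end
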